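(* For every integer $n\ge 4$ there exist a boolean classifier $\kappa:\{0,1\}^n\to\{0,1\}$ and a point $\mathbf v\in\{0,1\}^n$ such that, for the sample $(\mathbf v,\kappa(\mathbf v))$, there exist an irrelevant feature $i_1\in\mathcal F$ and a relevant feature $i_2\in\mathcal F\setminus\{i_1\}$ with $\mathrm{Sv}(i_1)\cdot\mathrm{Sv}(i_2)>0$ (issue I6).
   Context: Let $\mathcal F=\{1,\dots,n\}$. A boolean classifier is a non-constant function $\kappa:\{0,1\}^n\to\{0,1\}$; a sample is a pair $(\mathbf v,c)$ with $\mathbf v\in\{0,1\}^n$ and $c=\kappa(\mathbf v)$. For $\mathcal S\subseteq\mathcal F$ let $\Upsilon(\mathcal S;\mathbf v)=\{\mathbf x\in\{0,1\}^n : x_j=v_j \text{ for all } j\in\mathcal S\}$ and, for any function $g$ on $\{0,1\}^n$, $\mathbf E[g\mid \mathbf x_{\mathcal S}=\mathbf v_{\mathcal S}]=|\Upsilon(\mathcal S;\mathbf v)|^{-1}\sum_{\mathbf x\in\Upsilon(\mathcal S;\mathbf v)}g(\mathbf x)$ (uniform distribution, independent features). The characteristic function is $\upsilon(\mathcal S)=\mathbf E[\kappa\mid\mathbf x_{\mathcal S}=\mathbf v_{\mathcal S}]$, and the SHAP score of feature $i$ is $\mathrm{Sv}(i)=\sum_{\mathcal S\subseteq\mathcal F\setminus\{i\}}\frac{|\mathcal S|!\,(n-|\mathcal S|-1)!}{n!}\big(\upsilon(\mathcal S\cup\{i\})-\upsilon(\mathcal S)\big)$. The similarity predicate is $\sigma(\mathbf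 x)=1$ if $\kappa(\mathbf x)=\kappa(\mathbf v)$ and $0$ otherwise. A set $\mathcal S\subseteq\mathcal F$ is a weak abductive explanation (WAXp) if $\mathbf E[\sigma\mid\mathbf x_{\mathcal S}=\mathbf v_{\mathcal S}]=1$ (i.e. $\kappa(\mathbf x)=\kappa(\mathbf v)$ for all $\mathbf x\in\Upsilon(\mathcal S;\mathbf v)$); an abductive explanation (AXp) is a WAXp $\mathcal S$ such that $\mathcal S\setminus\{t\}$ is not a WAXp for every $t\in\mathcal S$. A feature is relevant if it belongs to at least one AXp, and irrelevant otherwise. *)

theory Defs
  imports Complex_Main
begin

text \<open>Points of {0,1}^n are represented as functions nat => bool supported on
  the feature set {1..n} (value False outside), with True = 1, False = 0.
  A classifier is a function on such points with values in bool (True = 1).\<close>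

definition feats :: "nat \<Rightarrow> nat set" where
  "feats n = {1..n}"

definition points :: "nat \<Rightarrow> (nat \<Rightarrow> bool) set" where
  "points n = {x. \<forall>j. j \<notin> feats n \<longrightarrow> \<not> x j}"

definition classifier :: "nat \<Rightarrow> ((nat \<Rightarrow> bool) \<Rightarrow> bool) \<Rightarrow> bool" where
  "classifier n \<kappa> \<longleftrightarrow> (\<exists>x\<in>points n. \<exists>y\<in>points n. \<kappa> x \<noteq> \<kappa> y)"

definition Upsilon :: "nat \<Rightarrow> nat set \<Rightarrow> (nat \<Rightarrow> bool) \<Rightarrow> (nat \<Rightarrow> bool) set" where
  "Upsilon n S v = {x \<in> points n. \<forall>j\<in>S. x j = v j}"

definition cond_exp :: "nat \<Rightarrow> ((nat \<Rightarrow> bool) \<Rightarrow> real) \<Rightarrow> nat set \<Rightarrow> (nat \<Rightarrow> bool) \<Rightarrow> real" where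
  "cond_exp n g S v = (\<Sum>x\<in>Upsilon n S v. g x) / real (card (Upsilon n S v))"

definition charfun :: "nat \<Rightarrow> ((nat \<Rightarrow> bool) \<Rightarrow> bool) \<Rightarrow> (nat \<Rightarrow> bool) \<Rightarrow> nat set \<Rightarrow> real" where
  "charfun n \<kappa> v S = cond_exp n (\<lambda>x. of_bool (\<kappa> x)) S v"

definition SHAP :: "nat \<Rightarrow> ((nat \<Rightarrow> bool) \<Rightarrow> bool) \<Rightarrow> (nat \<Rightarrow> bool) \<Rightarrow> nat \<Rightarrow> real" where
  "SHAP n \<kappa> v i = (\<Sum>S\<in>Pow (feats n - {i}).
      (fact (card S) * fact (n - card S - 1) / fact n) *
      (charfun n \<kappa> v (insert i S) - charfun n \<kappa> v S))"

definition WAXp :: "nat \<Rightarrow> ((nat \<Rightarrow> bool) \<Rightarrow> bool) \<Rightarrow> (nat \<Rightarrow> bool) \<Rightarrow> nat set \<Rightarrow> bool" where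
  "WAXp n \<kappa> v S \<longleftrightarrow> S \<subseteq> feats n \<and>
     cond_exp n (\<lambda>x. of_bool (\<kappa> x = \<kappa> v)) S v = 1"

definition AXp :: "nat \<Rightarrow> ((nat \<Rightarrow> bool) \<Rightarrow> bool) \<Rightarrow> (nat \<Rightarrow> bool) \<Rightarrow> nat set \<Rightarrow> bool" where
  "AXp n \<kappa> v S \<longleftrightarrow> WAXp n \<kappa> v S \<and> (\<forall>t\<in>S. \<not> WAXp n \<kappa> v (S - {t}))"

definition relevant :: "nat \<Rightarrow> ((nat \<Rightarrow> bool) \<Rightarrow> bool) \<Rightarrow> (nat \<Rightarrow> bool) \<Rightarrow> nat \<Rightarrow> bool" where
  "relevant n \<kappa> v i \<longleftrightarrow> (\<exists>S. AXp n \<kappa> v S \<and> i \<in> S)"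

end

theory Submission
  imports Defs
begin

text \<open>Take \<open>\<kappa>(x) = x\<^sub>4 \<and> ((x\<^sub>2 \<and> x\<^sub>3) \<or> (x\<^sub>1 \<and> \<not>x\<^sub>2 \<and> \<not>x\<^sub>3))\<close> at the all-ones point \<open>v\<close>.
  A point agreeing with \<open>v\<close> on \<open>S\<close> is always classified positively iff \<open>{2,3,4} \<subseteq> S\<close>, so
  \<open>{2,3,4}\<close> is the only AXp and feature 1 is irrelevant. Yet both features 1 and 4 are
  monotone at \<open>v\<close>: switching them off never turns a negative prediction into a positive
  one. Since fixing a feature at its value in \<open>v\<close> halves the set of admissible points, every
  marginal contribution of such a feature is an average of non-negative flip differences;
  the one for the empty coalition is strictly positive, so both SHAP scores are positive.\<close>

lemma finite_points: "finite (points n)"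
proof -
  have "points n \<subseteq> (\<lambda>A j. j \<in> A) ` Pow (feats n)"
  proof
    fix x assume "x \<in> points n"
    then have "x = (\<lambda>j. j \<in> {j \<in> feats n. x j})"
      unfolding points_def by auto
    then show "x \<in> (\<lambda>A j. j \<in> A) ` Pow (feats n)" by blast
  qed
  then show ?thesis
    by (rule finite_subset) (simp add: feats_def)
qed

lemma finite_Upsilon: "finite (Upsilon n S v)"
  using finite_points[of n] unfolding Upsilon_def by simp

lemma self_in_Upsilon: "v \<in> points n \<Longrightarrow> v \<in> Upsilon n S v"
  unfolding Upsilon_def by simp

lemma cond_exp_indicator_eq_1_iff:
  assumes "v \<in> points n"
  shows "cond_exp n (\<lambda>x. of_bool (P x)) S v = 1 \<longleftrightarrow> (\<forall>x\<in>Upsilon n S v. P x)"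
proof -
  let ?U = "Upsilon n S v"
  have fin: "finite ?U" by (rule finite_Upsilon)
  have "card ?U > 0"
    using fin self_in_Upsilon[OF assms] card_gt_0_iff by blast
  moreover have "(\<Sum>x\<in>?U. of_bool (P x) :: real) = real (card {x \<in> ?U. P x})"
    using fin by (simp add: sum.If_cases Int_def)
  ultimately have "cond_exp n (\<lambda>x. of_bool (P x)) S v = 1 \<longleftrightarrow> card {x \<in> ?U. P x} = card ?U"
    unfolding cond_exp_def by (auto simp add: divide_eq_1_iff)
  also have "\<dots> \<longleftrightarrow> {x \<in> ?U. P x} = ?U"
    using fin by (metis (no_types, lifting) card_subset_eq mem_Collect_eq subsetI)
  finally show ?thesis by blast
qed

lemma WAXp_iff_constant_on_Upsilon:
  assumes "v \<in> points n"
  shows "WAXp n \<kappa> v S \<longleftrightarrow> S \<subseteq> feats n \<and> (\<forall>x\<in>Upsilon n S v. \<kappa> x = \<kappa> v)"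
  unfolding WAXp_def cond_exp_indicator_eq_1_iff[OF assms] ..

lemma Upsilon_eq_Un_flip:
  assumes i: "i \<in> feats n" and "i \<notin> S"
  shows "Upsilon n S v = Upsilon n (insert i S) v \<union> (\<lambda>x. x(i := \<not> x i)) ` Upsilon n (insert i S) v"
    (is "_ = ?U \<union> ?flip ` ?U")
proof
  have flip_points: "?flip x \<in> points n" if "x \<in> points n" for x
    using that i unfolding points_def by auto
  show "Upsilon n S v \<subseteq> ?U \<union> ?flip ` ?U"
  proof
    fix x assume x: "x \<in> Upsilon n S v"
    show "x \<in> ?U \<union> ?flip ` ?U"
    proof (cases "x i = v i")
      case True
      then show ?thesis using x unfolding Upsilon_def by auto
    next
      case False
      have "?flip x \<in> points n" using x flip_points unfolding Upsilon_def by blast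
      then have "?flip x \<in> ?U"
        using x False \<open>i \<notin> S\<close> unfolding Upsilon_def by auto
      moreover have "x = ?flip (?flip x)" by simp
      ultimately show ?thesis by blast
    qed
  qed
  have "?flip x \<in> Upsilon n S v" if "x \<in> ?U" for x
  proof -
    have "?flip x \<in> points n" using that flip_points unfolding Upsilon_def by blast
    then show ?thesis using that \<open>i \<notin> S\<close> unfolding Upsilon_def by auto
  qed
  moreover have "?U \<subseteq> Upsilon n S v"
    unfolding Upsilon_def by auto
  ultimately show "?U \<union> ?flip ` ?U \<subseteq> Upsilon n S v"
    by blast
qed

text \<open>The two halves of \<open>\<Upsilon>(S)\<close> have equal size, so the difference of the two averages
  is half the average, over \<open>\<Upsilon>(S \<union> {i})\<close>, of the effect of flipping feature \<open>i\<close>.\<close>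

lemma cond_exp_insert_diff:
  assumes i: "i \<in> feats n" and "i \<notin> S" and v: "v \<in> points n"
  shows "cond_exp n g (insert i S) v - cond_exp n g S v =
     (\<Sum>x\<in>Upsilon n (insert i S) v. g x - g (x(i := \<not> x i)))
       / (2 * real (card (Upsilon n (insert i S) v)))"
proof -
  define U where "U = Upsilon n (insert i S) v"
  define flip where "flip = (\<lambda>x::nat \<Rightarrow> bool. x(i := \<not> x i))"
  have fin: "finite U" unfolding U_def by (rule finite_Upsilon)
  have "card U > 0"
    using fin self_in_Upsilon[OF v] card_gt_0_iff unfolding U_def by blast
  have inj: "inj_on flip U"
    by (rule inj_on_inverseI[of _ flip]) (simp add: flip_def)
  have split: "Upsilon n S v = U \<union> flip ` U"
    unfolding U_def flip_def by (rule Upsilon_eq_Un_flip[OF i \<open>i \<notin> S\<close>])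
  have disj: "U \<inter> flip ` U = {}"
    unfolding U_def Upsilon_def flip_def by auto
  have card_S: "card (Upsilon n S v) = 2 * card U"
    using split disj fin by (simp add: card_Un_disjoint card_image[OF inj])
  have sum_S: "(\<Sum>x\<in>Upsilon n S v. g x) = (\<Sum>x\<in>U. g x) + (\<Sum>x\<in>U. g (flip x))"
    using split disj fin by (simp add: sum.union_disjoint sum.reindex[OF inj])
  have "cond_exp n g (insert i S) v - cond_exp n g S v
      = (\<Sum>x\<in>U. g x) / card U - ((\<Sum>x\<in>U. g x) + (\<Sum>x\<in>U. g (flip x))) / (2 * real (card U))"
    unfolding cond_exp_def U_def[symmetric] card_S sum_S by simp
  also have "\<dots> = (\<Sum>x\<in>U. g x - g (flip x)) / (2 * real (card U))"
    using \<open>card U > 0\<close> by (simp add: field_simps sum_subtractf)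
  finally show ?thesis unfolding U_def flip_def .
qed

lemma cond_exp_insert_diff_nonneg:
  assumes "i \<in> feats n" "i \<notin> S" "v \<in> points n"
    and mono: "\<And>x. x \<in> points n \<Longrightarrow> x i = v i \<Longrightarrow> g (x(i := \<not> x i)) \<le> g x"
  shows "cond_exp n g (insert i S) v - cond_exp n g S v \<ge> 0"
  unfolding cond_exp_insert_diff[OF assms(1-3)]
  by (intro divide_nonneg_nonneg sum_nonneg) (use mono in \<open>auto simp: Upsilon_def\<close>)

lemma cond_exp_insert_diff_pos:
  assumes "i \<in> feats n" "i \<notin> S" "v \<in> points n"
    and mono: "\<And>x. x \<in> points n \<Longrightarrow> x i = v i \<Longrightarrow> g (x(i := \<not> x i)) \<le> g x"
    and y: "y \<in> Upsilon n (insert i S) v" and strict: "g (y(i := \<not> y i)) < g y"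
  shows "cond_exp n g (insert i S) v - cond_exp n g S v > 0"
proof -
  have fin: "finite (Upsilon n (insert i S) v)" by (rule finite_Upsilon)
  have "card (Upsilon n (insert i S) v) > 0"
    using fin y card_gt_0_iff by blast
  moreover have "(\<Sum>x\<in>Upsilon n (insert i S) v. g x - g (x(i := \<not> x i))) > 0"
    by (rule sum_pos2[OF fin y]) (use strict mono in \<open>auto simp: Upsilon_def\<close>)
  ultimately show ?thesis
    unfolding cond_exp_insert_diff[OF assms(1-3)] by simp
qed

lemma SHAP_pos_if_monotone:
  assumes i: "i \<in> feats n" and v: "v \<in> points n"
    and mono: "\<And>x. x \<in> points n \<Longrightarrow> x i = v i \<Longrightarrow> \<kappa> (x(i := \<not> x i)) \<Longrightarrow> \<kappa> x"
    and y: "y \<in> Upsilon n {i} v" and "\<kappa> y" and "\<not> \<kappa> (y(i := \<not> y i))"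
  shows "SHAP n \<kappa> v i > 0"
proof -
  let ?g = "\<lambda>x. of_bool (\<kappa> x) :: real"
  let ?w = "\<lambda>S. fact (card S) * fact (n - card S - 1) / fact n :: real"
  let ?d = "\<lambda>S. charfun n \<kappa> v (insert i S) - charfun n \<kappa> v S"
  have mono': "?g (x(i := \<not> x i)) \<le> ?g x" if "x \<in> points n" "x i = v i" for x
    using mono[OF that] by auto
  have pos: "?w {} * ?d {} > 0"
    using cond_exp_insert_diff_pos[of i n "{}" v ?g y] i v mono' y assms(5,6)
    unfolding charfun_def by simp
  have nonneg: "?w S * ?d S \<ge> 0" if "S \<in> Pow (feats n - {i})" for S
  proof -
    have "?d S \<ge> 0"
      using cond_exp_insert_diff_nonneg[of i n S v ?g] i v mono' that
      unfolding charfun_def by auto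
    then show ?thesis by simp
  qed
  have fin: "finite (Pow (feats n - {i}))"
    by (simp add: feats_def)
  show ?thesis
    unfolding SHAP_def
    by (rule sum_pos2[where f = "\<lambda>S. ?w S * ?d S", OF fin Pow_bottom pos nonneg])
qed

definition ones :: "nat \<Rightarrow> nat \<Rightarrow> bool" where
  "ones n j \<longleftrightarrow> j \<in> feats n"

definition kappa_I6 :: "(nat \<Rightarrow> bool) \<Rightarrow> bool" where
  "kappa_I6 x \<longleftrightarrow> x 4 \<and> (x 2 \<and> x 3 \<or> x 1 \<and> \<not> x 2 \<and> \<not> x 3)"

lemma ones_in_points: "ones n \<in> points n"
  unfolding ones_def points_def by simp

lemma classifier_kappa_I6:
  assumes "n \<ge> 4"
  shows "classifier n kappa_I6"
proof -
  have "kappa_I6 (ones n)" and "\<not> kappa_I6 (\<lambda>_. False)"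
    using assms by (auto simp: kappa_I6_def ones_def feats_def)
  moreover have "(\<lambda>_. False) \<in> points n" by (simp add: points_def)
  ultimately show ?thesis
    unfolding classifier_def using ones_in_points by metis
qed

lemma WAXp_kappa_I6_iff:
  assumes "n \<ge> 4"
  shows "WAXp n kappa_I6 (ones n) S \<longleftrightarrow> S \<subseteq> feats n \<and> {2, 3, 4} \<subseteq> S"
proof -
  have f: "ones n 1" "ones n 2" "ones n 3" "ones n 4"
    using assms by (auto simp: ones_def feats_def)
  have "(\<forall>x\<in>Upsilon n S (ones n). kappa_I6 x) \<longleftrightarrow> {2, 3, 4} \<subseteq> S"
  proof
    assume all: "\<forall>x\<in>Upsilon n S (ones n). kappa_I6 x"
    have "j \<in> S" if j: "j \<in> {2, 3, 4}" for j
    proof (rule ccontr)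
      assume "j \<notin> S"
      then have "(ones n)(j := False) \<in> Upsilon n S (ones n)"
        using ones_in_points unfolding Upsilon_def points_def by auto
      then have "kappa_I6 ((ones n)(j := False))"
        using all by blast
      then show False
        using j f unfolding kappa_I6_def by auto
    qed
    then show "{2, 3, 4} \<subseteq> S" by blast
  next
    assume "{2, 3, 4} \<subseteq> S"
    then show "\<forall>x\<in>Upsilon n S (ones n). kappa_I6 x"
      using f unfolding Upsilon_def kappa_I6_def by auto
  qed
  moreover have "kappa_I6 (ones n)"
    using f by (simp add: kappa_I6_def)
  ultimately show ?thesis
    by (simp add: WAXp_iff_constant_on_Upsilon[OF ones_in_points])
qed

lemma relevant_kappa_I6_iff:
  assumes "n \<ge> 4"
  shows "relevant n kappa_I6 (ones n) i \<longleftrightarrow> i \<in> {2, 3, 4}"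
proof
  assume "relevant n kappa_I6 (ones n) i"
  then obtain S where "AXp n kappa_I6 (ones n) S" "i \<in> S"
    unfolding relevant_def by blast
  then show "i \<in> {2, 3, 4}"
    unfolding AXp_def WAXp_kappa_I6_iff[OF assms] by auto
next
  assume "i \<in> {2, 3, 4}"
  moreover have "AXp n kappa_I6 (ones n) {2, 3, 4}"
    using assms unfolding AXp_def WAXp_kappa_I6_iff[OF assms] by (auto simp: feats_def)
  ultimately show "relevant n kappa_I6 (ones n) i"
    unfolding relevant_def by blast
qed

lemma SHAP_kappa_I6_pos:
  assumes "n \<ge> 4" and i: "i \<in> {1, 4}"
  shows "SHAP n kappa_I6 (ones n) i > 0"
proof -
  have f: "{1, 2, 3, 4} \<subseteq> feats n" using assms by (auto simp: feats_def)
  obtain y where y: "y \<in> Upsilon n {i} (ones n)" "kappa_I6 y" "\<not> kappa_I6 (y(i := \<not> y i))"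
  proof (cases "i = 1")
    case True
    show ?thesis
      by (rule that[of "(ones n)(2 := False, 3 := False)"])
        (use True f in \<open>auto simp: Upsilon_def points_def kappa_I6_def ones_def\<close>)
  next
    case False
    with i have "i = 4" by simp
    show ?thesis
      by (rule that[of "ones n"])
        (use \<open>i = 4\<close> f ones_in_points in \<open>auto simp: Upsilon_def kappa_I6_def ones_def\<close>)
  qed
  moreover have "kappa_I6 x"
    if "x \<in> points n" "x i = ones n i" "kappa_I6 (x(i := \<not> x i))" for x
    using that(2,3) i f by (auto simp: kappa_I6_def ones_def)
  moreover have "i \<in> feats n" using i f by blast
  ultimately show ?thesis
    by (intro SHAP_pos_if_monotone[OF _ ones_in_points, of i n kappa_I6 y])
qed

theorem proposition5:
  fixes n :: nat
  assumes "n \<ge> 4"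
  shows "\<exists>\<kappa> v. classifier n \<kappa> \<and> v \<in> points n \<and>
           (\<exists>i1 \<in> feats n. \<exists>i2 \<in> feats n - {i1}.
              \<not> relevant n \<kappa> v i1 \<and> relevant n \<kappa> v i2 \<and>
              SHAP n \<kappa> v i1 * SHAP n \<kappa> v i2 > 0)"
proof -
  have "1 \<in> feats n" and "4 \<in> feats n - {1}"
    using assms by (auto simp: feats_def)
  moreover have "\<not> relevant n kappa_I6 (ones n) 1" and "relevant n kappa_I6 (ones n) 4"
    using relevant_kappa_I6_iff[OF assms] by simp_all
  moreover have "SHAP n kappa_I6 (ones n) 1 * SHAP n kappa_I6 (ones n) 4 > 0"
    using SHAP_kappa_I6_pos[OF assms] by simp
  ultimately show ?thesis
    using classifier_kappa_I6[OF assms] ones_in_points by blast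
qed

end
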